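(* Let $P$ be a finite poset and let $r$ be the length of the longest chains of $P$. The following are equivalent: (1) $\mathbb{E}(\mathrm{chain}(k);\mathrm{ddeg})=\mathbb{E}(\mathrm{uni};\mathrm{ddeg})$ for all $k=0,1,\ldots,r$; (2) $\mathbb{E}(\mathrm{mchain}(m);\mathrm{ddeg})=\mathbb{E}(\mathrm{uni};\mathrm{ddeg})$ for all $m\geq 0$; (3) $\mathbb{E}(\mathrm{mchain}(m);\mathrm{ddeg})=\mathbb{E}(\mathrm{uni};\mathrm{ddeg})$ for all $m=0,1,\ldots,r$; (4) $\mathbb{E}(\widehat{\mathrm{mchain}}(m);\mathrm{ddeg})=\mathbb{E}(\mathrm{uni};\mathrm{ddeg})$ for all $m\geq 0$; (5) $\mathbb{E}(\widehat{\mathrm{mchain}}(m);\mathrm{ddeg})=\mathbb{E}(\mathrm{uni};\mathrm{ddeg})$ for all $m=0,1,\ldots,r$.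
   Context: All posets are finite. For a probability distribution $\mu$ on $P$ and a function $f\colon P\to\mathbb{R}$, $\mathbb{E}(\mu;f)=\sum_{p\in P}f(p)\,\mathbb{P}(\mu;p)$. The down-degree $\mathrm{ddeg}(p)$ is the number of elements covered by $p$. $\mathrm{uni}$ is the uniform distribution on $P$. A $k$-chain is a sequence $c_0<c_1<\cdots<c_k$ of elements of $P$; an $m$-multichain is a sequence $c_0\le c_1\le\cdots\le c_m$; we write $p\in c$ if $p=c_i$ for some $i$. The $k$-chain distribution is $\mathbb{P}(\mathrm{chain}(k);p)=\#\{k\text{-chains } c: p\in c\}/\big((k+1)\cdot\#\{k\text{-chains}\}\big)$. The $m$-multichain distribution $\mathrm{mchain}(m)$ gives $p$ probability proportional to the number of $m$-multichains $c$ with $p\in c$ (normalized to total probability 1). The modified $m$-multichain distribution is $\mathbb{P}(\widehat{\mathrm{mchain}}(m);p)=\#\{(c,i): c\text{ an }m\text{-multichain},\ c_i=p\}/\big((m+1)\cdot\#\{m\text{-multichains}\}\big)$. *)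

theory Defs
  imports Complex_Main
begin

text \<open>A finite poset is modelled as a type of class finite and order (the whole type is the poset).\<close>

definition covers :: "'a::order \<Rightarrow> 'a \<Rightarrow> bool" where
  "covers q p \<longleftrightarrow> q < p \<and> \<not> (\<exists>z. q < z \<and> z < p)"

definition ddeg :: "'a::{finite,order} \<Rightarrow> nat" where
  "ddeg p = card {q. covers q p}"

definition chains :: "nat \<Rightarrow> ('a::order) list set" where
  "chains k = {c. length c = k + 1 \<and> sorted_wrt (<) c}"

definition mchains :: "nat \<Rightarrow> ('a::order) list set" where
  "mchains m = {c. length c = m + 1 \<and> sorted_wrt (\<le>) c}"

definition longest_chain_length :: "'a::{finite,order} itself \<Rightarrow> nat" where
  "longest_chain_length _ = Max {k. (chains k :: 'a list set) \<noteq> {}}"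

definition expect :: "('a::finite \<Rightarrow> real) \<Rightarrow> ('a \<Rightarrow> real) \<Rightarrow> real" where
  "expect prob f = (\<Sum>p\<in>UNIV. f p * prob p)"

definition uni_prob :: "'a::finite \<Rightarrow> real" where
  "uni_prob p = 1 / real (card (UNIV :: 'a set))"

definition chain_prob :: "nat \<Rightarrow> 'a::{finite,order} \<Rightarrow> real" where
  "chain_prob k p = real (card {c \<in> chains k. p \<in> set c})
      / (real (k + 1) * real (card (chains k :: 'a list set)))"

definition mchain_prob :: "nat \<Rightarrow> 'a::{finite,order} \<Rightarrow> real" where
  "mchain_prob m p = real (card {c \<in> mchains m. p \<in> set c})
      / (\<Sum>q\<in>(UNIV :: 'a set). real (card {c \<in> mchains m. q \<in> set c}))"

definition mchain_hat_prob :: "nat \<Rightarrow> 'a::{finite,order} \<Rightarrow> real" where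
  "mchain_hat_prob m p = real (card {(c, i). c \<in> mchains m \<and> i \<le> m \<and> c ! i = p})
      / (real (m + 1) * real (card (mchains m :: 'a list set)))"

end

theory Submission
  imports Defs
begin

text \<open>
  Put \<open>g = ddeg - U\<close>, where \<open>U\<close> is the uniform expectation of \<open>ddeg\<close>. Each of the
  three distributions has expectation \<open>W(f) / W(1)\<close> for a weight \<open>W\<close> summing \<open>f\<close> over the
  elements (for the modified distribution: the positions) of all k-chains resp. m-multichains,
  so every condition says that the corresponding weights of \<open>g\<close> vanish. Each k-chain is the
  underlying chain of \<open>m choose k\<close> m-multichains, so the multichain weights are the binomial
  transform of the chain weights; deleting one copy of a repeated entry shows that the
  modified multichain weights are the partial sums of the multichain weights. Both transforms
  are unitriangular, hence preserve vanishing up to any index, and the chain weights vanish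
  beyond \<open>r\<close> because there are no longer chains.
\<close>

lemma binomial_transform_eq_0_iff:
  fixes a b :: "nat \<Rightarrow> 'a::comm_ring_1"
  assumes "\<And>m. b m = (\<Sum>k\<le>m. of_nat (m choose k) * a k)"
  shows "(\<forall>m\<le>n. b m = 0) \<longleftrightarrow> (\<forall>k\<le>n. a k = 0)"
proof
  assume b0: "\<forall>m\<le>n. b m = 0"
  show "\<forall>k\<le>n. a k = 0"
  proof (intro allI impI)
    fix k assume "k \<le> n"
    then show "a k = 0"
    proof (induction k rule: less_induct)
      case (less k)
      have "b k = (\<Sum>j<Suc k. of_nat (k choose j) * a j)"
        by (simp add: assms lessThan_Suc_atMost)
      also have "\<dots> = a k"
        using less by simp
      finally show ?case using b0 less.prems by simp
    qed
  qed
qed (simp add: assms)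

lemma partial_sums_eq_0_iff:
  fixes b :: "nat \<Rightarrow> 'a::ab_group_add"
  shows "(\<forall>m\<le>n. (\<Sum>j\<le>m. b j) = 0) \<longleftrightarrow> (\<forall>m\<le>n. b m = 0)"
proof
  assume sums0: "\<forall>m\<le>n. (\<Sum>j\<le>m. b j) = 0"
  show "\<forall>m\<le>n. b m = 0"
  proof (intro allI impI)
    fix m assume "m \<le> n"
    with sums0 have "(\<Sum>j\<le>m. b j) = 0" "(\<Sum>j\<le>m - 1. b j) = 0" by simp_all
    then show "b m = 0" by (cases m) simp_all
  qed
qed simp

lemma finite_chains: "finite (chains k :: 'a::{finite,order} list set)"
  unfolding chains_def
  by (rule finite_subset[OF _ finite_lists_length_eq[OF finite_UNIV, of "Suc k"]]) auto

lemma finite_mchains: "finite (mchains m :: 'a::{finite,order} list set)"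
  unfolding mchains_def
  by (rule finite_subset[OF _ finite_lists_length_eq[OF finite_UNIV, of "Suc m"]]) auto

lemma mchains_nonempty: "(mchains m :: 'a::order list set) \<noteq> {}"
proof -
  have "replicate (Suc m) undefined \<in> (mchains m :: 'a list set)"
    unfolding mchains_def by (induction m) auto
  then show ?thesis by blast
qed

lemma distinct_of_sorted_less: "sorted_wrt (<) xs \<Longrightarrow> distinct (xs :: 'a::order list)"
  by (induction xs) auto

lemma chains_nonempty_iff:
  "(chains k :: 'a::{finite,order} list set) \<noteq> {} \<longleftrightarrow> k \<le> longest_chain_length TYPE('a)"
proof -
  define K where "K = {k. (chains k :: 'a list set) \<noteq> {}}"
  have "K \<subseteq> {..card (UNIV :: 'a set)}"
  proof
    fix k assume "k \<in> K"
    then obtain c :: "'a list" where "c \<in> chains k" unfolding K_def by blast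
    then have "Suc k = card (set c)"
      by (simp add: chains_def distinct_card distinct_of_sorted_less)
    also have "\<dots> \<le> card (UNIV :: 'a set)" by (rule card_mono) auto
    finally show "k \<in> {..card (UNIV :: 'a set)}" by simp
  qed
  then have "finite K" by (rule finite_subset) simp
  have "[undefined] \<in> (chains 0 :: 'a list set)" by (simp add: chains_def)
  then have "K \<noteq> {}" unfolding K_def by blast
  have down_closed: "j \<in> K" if "k \<in> K" "j \<le> k" for j k
  proof -
    from \<open>k \<in> K\<close> obtain c :: "'a list" where "c \<in> chains k" unfolding K_def by blast
    then have "take (Suc j) c \<in> chains j" using \<open>j \<le> k\<close> by (auto simp: chains_def)
    then show ?thesis unfolding K_def by blast
  qed
  have "k \<in> K \<longleftrightarrow> k \<le> Max K"
    using Max_in[OF \<open>finite K\<close> \<open>K \<noteq> {}\<close>] Max_ge[OF \<open>finite K\<close>] down_closed by blast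
  then show ?thesis by (simp add: K_def longest_chain_length_def)
qed

definition chain_weight :: "nat \<Rightarrow> ('a::{finite,order} \<Rightarrow> real) \<Rightarrow> real" where
  "chain_weight k g = (\<Sum>c\<in>chains k. \<Sum>p\<in>set c. g p)"

definition mchain_weight :: "nat \<Rightarrow> ('a::{finite,order} \<Rightarrow> real) \<Rightarrow> real" where
  "mchain_weight m g = (\<Sum>c\<in>mchains m. \<Sum>p\<in>set c. g p)"

definition mchain_hat_weight :: "nat \<Rightarrow> ('a::{finite,order} \<Rightarrow> real) \<Rightarrow> real" where
  "mchain_hat_weight m g = (\<Sum>c\<in>mchains m. \<Sum>i\<le>m. g (c ! i))"

lemma sum_mult_card_filter_swap:
  fixes f :: "'a::finite \<Rightarrow> 'b::comm_semiring_1"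
  assumes "finite S"
  shows "(\<Sum>p\<in>UNIV. f p * of_nat (card {x\<in>S. R x p})) = (\<Sum>x\<in>S. \<Sum>p | R x p. f p)"
proof -
  have "(\<Sum>p\<in>UNIV. f p * of_nat (card {x\<in>S. R x p}))
      = (\<Sum>p\<in>UNIV. \<Sum>x\<in>S. if R x p then f p else 0)"
    using assms by (simp add: sum.If_cases Int_def mult.commute)
  also have "\<dots> = (\<Sum>x\<in>S. \<Sum>p\<in>UNIV. if R x p then f p else 0)"
    by (rule sum.swap)
  also have "\<dots> = (\<Sum>x\<in>S. \<Sum>p | R x p. f p)"
    by (simp add: sum.If_cases Int_def)
  finally show ?thesis .
qed

lemma expect_chain_prob_eq_iff:
  assumes "(chains k :: 'a::{finite,order} list set) \<noteq> {}"
  shows "expect (chain_prob k :: 'a \<Rightarrow> real) f = u \<longleftrightarrow> chain_weight k (\<lambda>p. f p - u) = 0"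
proof -
  define D where "D = real (k + 1) * real (card (chains k :: 'a list set))"
  have "D > 0"
    using assms by (simp add: D_def card_gt_0_iff finite_chains)
  have "expect (chain_prob k :: 'a \<Rightarrow> real) f
      = (\<Sum>p\<in>UNIV. f p * real (card {c \<in> chains k. p \<in> set c})) / D"
    unfolding expect_def chain_prob_def D_def by (simp add: sum_divide_distrib)
  also have "\<dots> = chain_weight k f / D"
    by (simp add: chain_weight_def sum_mult_card_filter_swap finite_chains)
  finally have expect_eq: "expect (chain_prob k :: 'a \<Rightarrow> real) f = chain_weight k f / D" .
  have "chain_weight k (\<lambda>p. f p - u) = chain_weight k f - u * D"
    by (simp add: chain_weight_def D_def sum_subtractf sum_distrib_left chains_def
        distinct_card distinct_of_sorted_less)
  with expect_eq \<open>D > 0\<close> show ?thesis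
    by (simp add: divide_eq_eq)
qed

lemma expect_mchain_prob_eq_iff:
  "expect (mchain_prob m :: 'a::{finite,order} \<Rightarrow> real) f = u
    \<longleftrightarrow> mchain_weight m (\<lambda>p. f p - u) = 0"
proof -
  define D where "D = (\<Sum>q\<in>(UNIV :: 'a set). real (card {c \<in> mchains m. q \<in> set c}))"
  have D_eq: "D = mchain_weight m (\<lambda>_::'a. 1)"
    using sum_mult_card_filter_swap[OF finite_mchains, where f = "\<lambda>_::'a. 1"
        and R = "\<lambda>c q. q \<in> set c"]
    by (simp add: D_def mchain_weight_def)
  obtain c :: "'a list" where "c \<in> mchains m" using mchains_nonempty by blast
  then have "D > 0"
    unfolding D_eq mchain_weight_def
    by (intro sum_pos2[OF finite_mchains]) (auto simp: mchains_def card_gt_0_iff)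
  have "expect (mchain_prob m :: 'a \<Rightarrow> real) f
      = (\<Sum>p\<in>UNIV. f p * real (card {c \<in> mchains m. p \<in> set c})) / D"
    unfolding expect_def mchain_prob_def D_def by (simp add: sum_divide_distrib)
  also have "\<dots> = mchain_weight m f / D"
    by (simp add: mchain_weight_def sum_mult_card_filter_swap finite_mchains)
  finally have expect_eq: "expect (mchain_prob m :: 'a \<Rightarrow> real) f = mchain_weight m f / D" .
  have "mchain_weight m (\<lambda>p. f p - u) = mchain_weight m f - u * D"
    by (simp add: D_eq mchain_weight_def sum_subtractf sum_distrib_left mult.commute)
  with expect_eq \<open>D > 0\<close> show ?thesis
    by (simp add: divide_eq_eq)
qed

lemma expect_mchain_hat_prob_eq_iff:
  "expect (mchain_hat_prob m :: 'a::{finite,order} \<Rightarrow> real) f = u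
    \<longleftrightarrow> mchain_hat_weight m (\<lambda>p. f p - u) = 0"
proof -
  define D where "D = real (m + 1) * real (card (mchains m :: 'a list set))"
  have "D > 0"
    by (simp add: D_def card_gt_0_iff finite_mchains mchains_nonempty)
  have positions: "{(c, i). c \<in> mchains m \<and> i \<le> m \<and> c ! i = p}
      = {x \<in> mchains m \<times> {..m}. fst x ! snd x = p}" for p :: 'a
    by auto
  have "expect (mchain_hat_prob m :: 'a \<Rightarrow> real) f
      = (\<Sum>p\<in>UNIV. f p * real (card {x \<in> mchains m \<times> {..m}. fst x ! snd x = p})) / D"
    unfolding expect_def mchain_hat_prob_def positions D_def by (simp add: sum_divide_distrib)
  also have "\<dots> = mchain_hat_weight m f / D"
    by (simp add: mchain_hat_weight_def sum_mult_card_filter_swap finite_mchains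
        sum.cartesian_product split_def)
  finally have expect_eq: "expect (mchain_hat_prob m :: 'a \<Rightarrow> real) f = mchain_hat_weight m f / D" .
  have "mchain_hat_weight m (\<lambda>p. f p - u) = mchain_hat_weight m f - u * D"
    by (simp add: D_def mchain_hat_weight_def sum_subtractf sum_distrib_left)
  with expect_eq \<open>D > 0\<close> show ?thesis
    by (simp add: divide_eq_eq)
qed

definition mchains_with_support :: "nat \<Rightarrow> 'a::order list \<Rightarrow> 'a list set" where
  "mchains_with_support m s = {c \<in> mchains m. remdups c = s}"

lemma finite_mchains_with_support:
  "finite (mchains_with_support m s :: 'a::{finite,order} list set)"
  unfolding mchains_with_support_def by (rule finite_subset[OF _ finite_mchains]) auto

lemma hd_le_of_sorted: "sorted_wrt (\<le>) c \<Longrightarrow> y \<in> set c \<Longrightarrow> hd c \<le> (y::'a::order)"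
  by (cases c) auto

lemma mchains_with_support_Suc:
  assumes "sorted_wrt (<) (s::'a::order list)"
  shows "mchains_with_support (Suc m) s
    = (\<lambda>c. hd c # c) ` mchains_with_support m s \<union> (\<lambda>c. hd s # c) ` mchains_with_support m (tl s)"
    (is "_ = ?repeat \<union> ?new")
proof (intro equalityI subsetI)
  fix c assume "c \<in> mchains_with_support (Suc m) s"
  then have len: "length c = Suc (Suc m)" and sorted: "sorted_wrt (\<le>) c" and supp: "remdups c = s"
    by (simp_all add: mchains_with_support_def mchains_def)
  then obtain x c' where c: "c = x # c'" by (cases c) auto
  with sorted have x_le: "\<forall>y\<in>set c'. x \<le> y" and "sorted_wrt (\<le>) c'" by simp_all
  with len c have c': "c' \<in> mchains m" by (simp add: mchains_def)
  show "c \<in> ?repeat \<union> ?new"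
  proof (cases "x \<in> set c'")
    case True
    then have "hd c' \<in> set c'" by (cases c') auto
    with True x_le hd_le_of_sorted[OF \<open>sorted_wrt (\<le>) c'\<close>] have "x = hd c'"
      by (simp add: order.antisym)
    with True c c' supp have "c = hd c' # c'" "c' \<in> mchains_with_support m s"
      by (simp_all add: mchains_with_support_def)
    then show ?thesis by blast
  next
    case False
    with c c' supp have "c = hd s # c'" "c' \<in> mchains_with_support m (tl s)"
      by (auto simp: mchains_with_support_def)
    then show ?thesis by blast
  qed
next
  fix c
  assume "c \<in> ?repeat \<union> ?new"
  then consider c' where "c = hd c' # c'" "c' \<in> mchains_with_support m s"
    | c' where "c = hd s # c'" "c' \<in> mchains_with_support m (tl s)"
    by blast
  then show "c \<in> mchains_with_support (Suc m) s"
  proof cases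
    case 1
    then have "hd c' \<in> set c'" by (cases c') (auto simp: mchains_with_support_def mchains_def)
    with 1 hd_le_of_sorted show ?thesis by (auto simp: mchains_with_support_def mchains_def)
  next
    case 2
    then have c': "length c' = Suc m" "sorted_wrt (\<le>) c'" "remdups c' = tl s"
      by (simp_all add: mchains_with_support_def mchains_def)
    then obtain h t where s: "s = h # t" by (cases s) auto
    with assms c' have "\<forall>y\<in>set c'. h < y" by (metis list.sel(3) set_remdups sorted_wrt.simps(2))
    with 2 c' s show ?thesis
      by (auto simp: mchains_with_support_def mchains_def order.strict_implies_order)
  qed
qed

lemma card_mchains_with_support:
  assumes "sorted_wrt (<) (s::'a::{finite,order} list)" "s \<noteq> []"
  shows "card (mchains_with_support m s) = m choose (length s - 1)"
  using assms
proof (induction m arbitrary: s)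
  case 0
  have "mchains_with_support 0 s = (if length s = 1 then {s} else {})"
    by (auto simp: mchains_with_support_def mchains_def length_Suc_conv)
  with 0 show ?case by (cases s) auto
next
  case (Suc m)
  have "sorted_wrt (<) (tl s)" using Suc.prems by (cases s) auto
  have "hd c \<noteq> hd s" if "c \<in> mchains_with_support m (tl s)" for c
  proof -
    from that have "remdups c = tl s" "c \<noteq> []"
      by (auto simp: mchains_with_support_def mchains_def)
    then have "hd c \<in> set (tl s)" by (metis hd_in_set set_remdups)
    moreover have "hd s \<notin> set (tl s)" using Suc.prems by (cases s) auto
    ultimately show ?thesis by metis
  qed
  then have disjoint: "(\<lambda>c. hd c # c) ` mchains_with_support m s
      \<inter> (\<lambda>c. hd s # c) ` mchains_with_support m (tl s) = {}"
    by blast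
  have "card (mchains_with_support (Suc m) s)
      = card (mchains_with_support m s) + card (mchains_with_support m (tl s))"
    unfolding mchains_with_support_Suc[OF Suc.prems(1)]
    by (subst card_Un_disjoint)
      (auto simp: finite_mchains_with_support disjoint card_image inj_on_def)
  also have "\<dots> = (m choose (length s - 1)) + (if tl s = [] then 0 else m choose (length s - 2))"
    using Suc.IH[OF Suc.prems] Suc.IH[OF \<open>sorted_wrt (<) (tl s)\<close>]
    by (auto simp: mchains_with_support_def mchains_def numeral_2_eq_2)
  also have "\<dots> = Suc m choose (length s - 1)"
    using Suc.prems(2) by (cases s; cases "tl s") auto
  finally show ?case .
qed

lemma sorted_less_remdups: "sorted_wrt (\<le>) c \<Longrightarrow> sorted_wrt (<) (remdups (c::'a::order list))"
  by (induction c) (auto simp: order.strict_iff_order)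

lemma remdups_mchain_mem_chains: "c \<in> mchains m \<Longrightarrow> \<exists>k\<le>m. remdups c \<in> chains k"
proof -
  assume "c \<in> mchains m"
  then have "length (remdups c) \<le> Suc m" "remdups c \<noteq> []" "sorted_wrt (<) (remdups c)"
    using length_remdups_leq[of c] by (auto simp: mchains_def sorted_less_remdups)
  then have "remdups c \<in> chains (length (remdups c) - 1)" "length (remdups c) - 1 \<le> m"
    by (auto simp: chains_def)
  then show ?thesis by blast
qed

lemma mchain_weight_eq_binomial_sum:
  fixes g :: "'a::{finite,order} \<Rightarrow> real"
  shows "mchain_weight m g = (\<Sum>k\<le>m. real (m choose k) * chain_weight k g)"
proof -
  define T :: "'a list set" where "T = (\<Union>k\<le>m. chains k)"
  have "finite T" by (simp add: T_def finite_chains)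
  have "remdups ` (mchains m :: 'a list set) \<subseteq> T"
    unfolding T_def using remdups_mchain_mem_chains by blast
  then have "mchain_weight m g = (\<Sum>s\<in>T. \<Sum>c\<in>mchains_with_support m s. \<Sum>p\<in>set c. g p)"
    unfolding mchain_weight_def mchains_with_support_def
    by (rule sum.group[OF finite_mchains \<open>finite T\<close>, symmetric])
  also have "\<dots> = (\<Sum>s\<in>T. real (m choose (length s - 1)) * (\<Sum>p\<in>set s. g p))"
  proof (rule sum.cong[OF refl])
    fix s assume "s \<in> T"
    then have "sorted_wrt (<) s" "s \<noteq> []" by (auto simp: T_def chains_def)
    have "(\<Sum>c\<in>mchains_with_support m s. \<Sum>p\<in>set c. g p)
        = (\<Sum>c\<in>mchains_with_support m s. \<Sum>p\<in>set s. g p)"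
      by (rule sum.cong) (auto simp: mchains_with_support_def)
    then show "(\<Sum>c\<in>mchains_with_support m s. \<Sum>p\<in>set c. g p)
        = real (m choose (length s - 1)) * (\<Sum>p\<in>set s. g p)"
      by (simp add: card_mchains_with_support[OF \<open>sorted_wrt (<) s\<close> \<open>s \<noteq> []\<close>])
  qed
  also have "\<dots> = (\<Sum>k\<le>m. \<Sum>s\<in>chains k. real (m choose (length s - 1)) * (\<Sum>p\<in>set s. g p))"
    unfolding T_def
    by (rule sum.UNION_disjoint) (simp_all add: finite_chains, auto simp: chains_def)
  also have "\<dots> = (\<Sum>k\<le>m. real (m choose k) * chain_weight k g)"
    by (simp add: chain_weight_def chains_def sum_distrib_left)
  finally show ?thesis .
qed

lemma sum_nth_sorted_eq_sum_set_plus_repeats: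
  fixes c :: "'a::order list" and g :: "'a \<Rightarrow> 'b::comm_monoid_add"
  assumes "sorted_wrt (\<le>) c" "length c = Suc n"
  shows "(\<Sum>i\<le>n. g (c ! i)) = (\<Sum>p\<in>set c. g p) + (\<Sum>i<n. if c ! i = c ! Suc i then g (c ! i) else 0)"
  using assms
proof (induction n arbitrary: c)
  case 0
  then show ?case by (auto simp: length_Suc_conv)
next
  case (Suc n)
  then obtain x c' where c: "c = x # c'" and c': "sorted_wrt (\<le>) c'" "length c' = Suc n"
    and x_le: "\<forall>y\<in>set c'. x \<le> y"
    by (cases c) auto
  have "c' ! 0 \<in> set c'" using c' by simp
  have "x \<notin> set c'" if "x \<noteq> c' ! 0"
    using that x_le hd_le_of_sorted[OF c'(1)] \<open>c' ! 0 \<in> set c'\<close> c'(2)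
    by (metis hd_conv_nth list.size(3) nat.distinct(1) order.antisym)
  then have "(\<Sum>p\<in>set c. g p) = (if x = c' ! 0 then 0 else g x) + (\<Sum>p\<in>set c'. g p)"
    using \<open>c' ! 0 \<in> set c'\<close> c by (auto simp: insert_absorb)
  moreover have "(\<Sum>i\<le>Suc n. g (c ! i)) = g x + (\<Sum>i\<le>n. g (c' ! i))"
    unfolding c by (simp add: sum.atMost_Suc_shift del: sum.atMost_Suc)
  moreover have "(\<Sum>i<Suc n. if c ! i = c ! Suc i then g (c ! i) else 0)
      = (if x = c' ! 0 then g x else 0) + (\<Sum>i<n. if c' ! i = c' ! Suc i then g (c' ! i) else 0)"
    unfolding c by (simp add: sum.lessThan_Suc_shift del: sum.lessThan_Suc cong: if_cong)
  ultimately show ?case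
    using Suc.IH[OF c'] by (simp add: ac_simps)
qed

lemma sorted_wrt_le_duplicate:
  "sorted_wrt (\<le>) (xs @ y # y # zs) \<longleftrightarrow> sorted_wrt (\<le>) (xs @ (y::'a::order) # zs)"
  by (auto simp: sorted_wrt_append)

lemma split_at_nth:
  assumes "i < length d"
  shows "\<exists>xs y zs. d = xs @ y # zs \<and> length xs = i"
  using assms id_take_nth_drop[OF assms] by (intro exI[of _ "take i d"]) auto

lemma split_at_repeated_nth:
  assumes "Suc i < length c" "c ! i = c ! Suc i"
  shows "\<exists>xs y zs. c = xs @ y # y # zs \<and> length xs = i"
proof -
  from assms have "c = take i c @ c ! i # c ! i # drop (Suc (Suc i)) c"
    by (metis Cons_nth_drop_Suc Suc_lessD append_take_drop_id)
  with assms(1) show ?thesis by (intro exI[of _ "take i c"]) auto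
qed

lemma sum_mchains_repeats_eq_mchain_hat_weight:
  fixes g :: "'a::{finite,order} \<Rightarrow> real"
  shows "(\<Sum>c\<in>mchains (Suc m). \<Sum>i<Suc m. if c ! i = c ! Suc i then g (c ! i) else 0)
    = mchain_hat_weight m g"
proof -
  define E :: "('a list \<times> nat) set"
    where "E = (SIGMA c:mchains (Suc m). {i \<in> {..<Suc m}. c ! i = c ! Suc i})"
  define del :: "'a list \<times> nat \<Rightarrow> 'a list \<times> nat"
    where "del = (\<lambda>(c, i). (take i c @ drop (Suc i) c, i))"
  define dup :: "'a list \<times> nat \<Rightarrow> 'a list \<times> nat"
    where "dup = (\<lambda>(d, i). (take (Suc i) d @ drop i d, i))"
  have "(\<Sum>c\<in>mchains (Suc m). \<Sum>i<Suc m. if c ! i = c ! Suc i then g (c ! i) else 0)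
      = (\<Sum>(c, i)\<in>E. g (c ! i))"
    unfolding E_def sum.inter_filter[OF finite_lessThan, symmetric]
    by (rule sum.Sigma) (simp_all add: finite_mchains)
  also have "\<dots> = (\<Sum>(d, i)\<in>mchains m \<times> {..m}. g (d ! i))"
  proof (rule sum.reindex_bij_witness[where j = del and i = dup])
    fix a :: "'a list \<times> nat" assume "a \<in> E"
    then obtain c i where "a = (c, i)" "Suc i < length c" "c ! i = c ! Suc i"
      by (auto simp: E_def mchains_def)
    then obtain xs y zs where "a = (xs @ y # y # zs, length xs)"
      using split_at_repeated_nth by blast
    with \<open>a \<in> E\<close> show "dup (del a) = a" "del a \<in> mchains m \<times> {..m}"
      "(case del a of (d, i) \<Rightarrow> g (d ! i)) = (case a of (c, i) \<Rightarrow> g (c ! i))"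
      by (auto simp: del_def dup_def E_def mchains_def sorted_wrt_le_duplicate nth_append)
  next
    fix b :: "'a list \<times> nat" assume "b \<in> mchains m \<times> {..m}"
    then obtain d i where "b = (d, i)" "i < length d"
      by (auto simp: mchains_def)
    then obtain xs y zs where "b = (xs @ y # zs, length xs)"
      using split_at_nth by blast
    with \<open>b \<in> mchains m \<times> {..m}\<close> show "del (dup b) = b" "dup b \<in> E"
      by (auto simp: del_def dup_def E_def mchains_def sorted_wrt_le_duplicate nth_append)
  qed
  also have "\<dots> = mchain_hat_weight m g"
    by (simp add: mchain_hat_weight_def sum.cartesian_product)
  finally show ?thesis .
qed

lemma mchain_hat_weight_Suc:
  fixes g :: "'a::{finite,order} \<Rightarrow> real"
  shows "mchain_hat_weight (Suc m) g = mchain_weight (Suc m) g + mchain_hat_weight m g"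
proof -
  have "mchain_hat_weight (Suc m) g = (\<Sum>c\<in>mchains (Suc m).
      (\<Sum>p\<in>set c. g p) + (\<Sum>i<Suc m. if c ! i = c ! Suc i then g (c ! i) else 0))"
    unfolding mchain_hat_weight_def
    by (rule sum.cong[OF refl], rule sum_nth_sorted_eq_sum_set_plus_repeats)
      (auto simp: mchains_def)
  then show ?thesis
    unfolding sum.distrib mchain_weight_def sum_mchains_repeats_eq_mchain_hat_weight .
qed

lemma mchain_hat_weight_eq_sum:
  fixes g :: "'a::{finite,order} \<Rightarrow> real"
  shows "mchain_hat_weight m g = (\<Sum>j\<le>m. mchain_weight j g)"
proof (induction m)
  case 0
  show ?case
    unfolding mchain_hat_weight_def mchain_weight_def
    by (simp, rule sum.cong) (auto simp: mchains_def length_Suc_conv)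
next
  case (Suc m)
  then show ?case by (simp add: mchain_hat_weight_Suc)
qed

theorem proposition2p4:
  fixes r :: nat
  assumes "r = longest_chain_length TYPE('a::{finite,order})"
  defines "U \<equiv> expect (uni_prob :: 'a \<Rightarrow> real) (\<lambda>p. real (ddeg p))"
  shows
    "((\<forall>k\<le>r. expect ((chain_prob k) :: 'a \<Rightarrow> real) (\<lambda>p. real (ddeg p)) = U)
       \<longleftrightarrow> (\<forall>m. expect ((mchain_prob m) :: 'a \<Rightarrow> real) (\<lambda>p. real (ddeg p)) = U))
   \<and> ((\<forall>k\<le>r. expect ((chain_prob k) :: 'a \<Rightarrow> real) (\<lambda>p. real (ddeg p)) = U)
       \<longleftrightarrow> (\<forall>m\<le>r. expect ((mchain_prob m) :: 'a \<Rightarrow> real) (\<lambda>p. real (ddeg p)) = U))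
   \<and> ((\<forall>k\<le>r. expect ((chain_prob k) :: 'a \<Rightarrow> real) (\<lambda>p. real (ddeg p)) = U)
       \<longleftrightarrow> (\<forall>m. expect ((mchain_hat_prob m) :: 'a \<Rightarrow> real) (\<lambda>p. real (ddeg p)) = U))
   \<and> ((\<forall>k\<le>r. expect ((chain_prob k) :: 'a \<Rightarrow> real) (\<lambda>p. real (ddeg p)) = U)
       \<longleftrightarrow> (\<forall>m\<le>r. expect ((mchain_hat_prob m) :: 'a \<Rightarrow> real) (\<lambda>p. real (ddeg p)) = U))"
proof -
  define g :: "'a \<Rightarrow> real" where "g = (\<lambda>p. real (ddeg p) - U)"
  have chain_le: "expect (chain_prob k :: 'a \<Rightarrow> real) (\<lambda>p. real (ddeg p)) = U \<longleftrightarrow> chain_weight k g = 0"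
    if "k \<le> r" for k
    using that by (simp add: assms(1) g_def chains_nonempty_iff expect_chain_prob_eq_iff)
  have chain_gt: "chain_weight k g = 0" if "r < k" for k
    using that chains_nonempty_iff[of k, where 'a='a] by (simp add: assms(1) chain_weight_def)
  have mchain: "expect (mchain_prob m :: 'a \<Rightarrow> real) (\<lambda>p. real (ddeg p)) = U
      \<longleftrightarrow> mchain_weight m g = 0"
    and hat: "expect (mchain_hat_prob m :: 'a \<Rightarrow> real) (\<lambda>p. real (ddeg p)) = U
      \<longleftrightarrow> mchain_hat_weight m g = 0" for m
    by (simp_all add: g_def expect_mchain_prob_eq_iff expect_mchain_hat_prob_eq_iff)
  have binomial: "(\<forall>m\<le>n. mchain_weight m g = 0) \<longleftrightarrow> (\<forall>k\<le>n. chain_weight k g = 0)"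
    and partial: "(\<forall>m\<le>n. mchain_hat_weight m g = 0) \<longleftrightarrow> (\<forall>m\<le>n. mchain_weight m g = 0)" for n
    by (simp_all add: binomial_transform_eq_0_iff mchain_weight_eq_binomial_sum
        mchain_hat_weight_eq_sum partial_sums_eq_0_iff)
  have hat_all: "(\<forall>m. mchain_hat_weight m g = 0) \<longleftrightarrow> (\<forall>m. mchain_weight m g = 0)"
    by (meson partial order.refl)
  have "(\<forall>m. mchain_weight m g = 0) \<longleftrightarrow> (\<forall>n. \<forall>m\<le>n. mchain_weight m g = 0)" by auto
  also have "\<dots> \<longleftrightarrow> (\<forall>k. chain_weight k g = 0)" by (auto simp: binomial)
  also have "\<dots> \<longleftrightarrow> (\<forall>k\<le>r. chain_weight k g = 0)" using chain_gt not_le by blast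
  finally show ?thesis
    by (simp add: chain_le mchain hat hat_all binomial partial)
qed

end
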